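(* Let $a>0$ and $\phi_a(x)=e^{-ax^2}$. There is a constant $C>0$ (depending only on $a$) such that every $f=\sum_{k\in\mathbb{Z}}c_k\phi_a(\cdot-k)$ with $c\in\ell^\infty(\mathbb{Z})$ possesses an extension to an entire function satisfying $|f(x+iy)|\le C\|c\|_\infty e^{ay^2}$ for all $x,y\in\mathbb{R}$. *)

theory Defs
  imports "HOL-Analysis.Analysis"
begin

definition gauss :: "real \<Rightarrow> real \<Rightarrow> real" where
  "gauss a x = exp (- a * x\<^sup>2)"

definition gauss_series :: "real \<Rightarrow> (int \<Rightarrow> complex) \<Rightarrow> real \<Rightarrow> complex" where
  "gauss_series a c x = (\<Sum>\<^sub>\<infinity>k\<in>(UNIV::int set). c k * complex_of_real (gauss a (x - of_int k)))"

definition linf_norm :: "(int \<Rightarrow> complex) \<Rightarrow> real" where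
  "linf_norm c = (SUP k. norm (c k))"

end

theory Submission
  imports Defs "HOL-Complex_Analysis.Complex_Analysis"
begin

text \<open>The Gaussians extend to entire functions \<open>exp (-a (z - k)\<^sup>2)\<close> of modulus
  \<open>exp (a y\<^sup>2) \<phi>\<^sub>a(x - k)\<close> at \<open>z = x + i y\<close>. Since \<open>u\<^sup>2 \<ge> \<bar>u\<bar> - 1\<close>, one has
  \<open>\<phi>\<^sub>a(x - k) \<le> exp (a + a \<bar>x\<bar>) exp (-a \<bar>k\<bar>)\<close>, a summable majorant that is uniform on compact
  sets, so the series with bounded coefficients is entire by the Weierstrass M-test. On a
  horizontal line its modulus is at most \<open>\<parallel>c\<parallel>\<^sub>\<infinity> exp (a y\<^sup>2) \<Sum>\<^sub>k \<phi>\<^sub>a(x - k)\<close>, and the last sum is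
  1-periodic in \<open>x\<close>, so the majorant with \<open>0 \<le> x \<le> 1\<close> bounds it uniformly.\<close>

definition gauss_shift :: "real \<Rightarrow> int \<Rightarrow> complex \<Rightarrow> complex" where
  "gauss_shift a k z = exp (- complex_of_real a * (z - of_int k)\<^sup>2)"

definition gauss_expansion :: "real \<Rightarrow> (int \<Rightarrow> complex) \<Rightarrow> complex \<Rightarrow> complex" where
  "gauss_expansion a c z = (\<Sum>\<^sub>\<infinity>k\<in>UNIV. c k * gauss_shift a k z)"

lemma norm_gauss_shift: "norm (gauss_shift a k z) = exp (a * (Im z)\<^sup>2) * gauss a (Re z - of_int k)"
  by (simp add: gauss_shift_def gauss_def power2_eq_square algebra_simps flip: exp_add)

lemma gauss_shift_of_real: "gauss_shift a k (complex_of_real x) = complex_of_real (gauss a (x - of_int k))"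
  by (simp add: gauss_shift_def gauss_def flip: exp_of_real)

lemma gauss_le_exp_neg_abs:
  assumes "a \<ge> 0"
  shows "gauss a (x - of_int k) \<le> exp (a + a * \<bar>x\<bar>) * exp (- a * \<bar>of_int k\<bar>)"
proof -
  define u where "u = x - of_int k"
  have "0 \<le> (\<bar>u\<bar> - 1)\<^sup>2" by simp
  then have "\<bar>u\<bar> - 1 \<le> u\<^sup>2" by (simp add: power2_diff)
  moreover have "\<bar>of_int k\<bar> - \<bar>x\<bar> \<le> \<bar>u\<bar>" unfolding u_def by linarith
  ultimately have "a * (\<bar>of_int k\<bar> - \<bar>x\<bar> - 1) \<le> a * u\<^sup>2"
    using assms by (intro mult_left_mono) auto
  then show ?thesis
    by (simp add: gauss_def u_def algebra_simps flip: exp_add)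
qed

lemma summable_on_int_from_nat:
  fixes f :: "int \<Rightarrow> 'a :: {uniform_topological_group_add, topological_comm_monoid_add,
                           ab_group_add, complete_uniform_space}"
  assumes "(\<lambda>n. f (int n)) summable_on UNIV" and "(\<lambda>n. f (- int n)) summable_on UNIV"
  shows "f summable_on UNIV"
proof -
  have "f summable_on range int"
    using assms(1) by (subst summable_on_reindex) (auto simp: o_def)
  moreover have "f summable_on range (\<lambda>n. - int n)"
    using assms(2) by (subst summable_on_reindex) (auto simp: o_def inj_on_def)
  moreover have "UNIV = range int \<union> range (\<lambda>n. - int n)"
    by (auto intro: image_eqI[of _ _ "nat _"] simp: image_iff) presburger
  ultimately show ?thesis by (metis summable_on_union)
qed

lemma summable_exp_neg_abs_int:
  fixes a :: real
  assumes "a > 0"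
  shows "(\<lambda>k::int. exp (- a * \<bar>of_int k\<bar>)) summable_on UNIV"
proof -
  have "summable (\<lambda>n::nat. exp (-a) ^ n)"
    by (rule summable_geometric) (use assms in simp)
  then have "(\<lambda>n::nat. exp (- a * real n)) summable_on UNIV"
    by (subst summable_on_UNIV_nonneg_real_iff) (simp_all add: mult.commute flip: exp_of_nat2_mult)
  then show ?thesis
    by (intro summable_on_int_from_nat) simp_all
qed

lemma summable_gauss_shifts:
  assumes "a > 0"
  shows "(\<lambda>k::int. gauss a (x - of_int k)) summable_on UNIV"
proof (rule summable_on_comparison_test)
  show "(\<lambda>k. exp (a + a * \<bar>x\<bar>) * exp (- a * \<bar>of_int k\<bar>)) summable_on UNIV"
    by (intro summable_on_cmult_right summable_exp_neg_abs_int assms)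
qed (use assms gauss_le_exp_neg_abs in \<open>auto simp: gauss_def\<close>)

lemma infsum_gauss_shifts_le:
  assumes "a > 0"
  shows "(\<Sum>\<^sub>\<infinity>k\<in>UNIV. gauss a (x - of_int k)) \<le> exp (2 * a) * (\<Sum>\<^sub>\<infinity>k\<in>UNIV. exp (- a * \<bar>of_int k\<bar>))"
proof -
  define t where "t = x - of_int \<lfloor>x\<rfloor>"
  have t: "0 \<le> t" "t \<le> 1" unfolding t_def by linarith+
  have "(\<Sum>\<^sub>\<infinity>k\<in>UNIV. gauss a (x - of_int k)) = (\<Sum>\<^sub>\<infinity>k\<in>UNIV. gauss a (t - of_int k))"
    by (rule infsum_reindex_bij_witness[of UNIV "\<lambda>k. k + \<lfloor>x\<rfloor>" "\<lambda>k. k - \<lfloor>x\<rfloor>"])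
       (auto simp: t_def algebra_simps)
  also have "\<dots> \<le> (\<Sum>\<^sub>\<infinity>k\<in>UNIV. exp (2 * a) * exp (- a * \<bar>of_int k\<bar>))"
  proof (rule infsum_mono)
    fix k :: int
    have "gauss a (t - of_int k) \<le> exp (a + a * \<bar>t\<bar>) * exp (- a * \<bar>of_int k\<bar>)"
      using assms by (intro gauss_le_exp_neg_abs) simp
    also have "\<dots> \<le> exp (2 * a) * exp (- a * \<bar>of_int k\<bar>)"
      using t assms by (intro mult_right_mono) (simp_all add: mult_left_le)
    finally show "gauss a (t - of_int k) \<le> exp (2 * a) * exp (- a * \<bar>of_int k\<bar>)" .
  qed (intro summable_gauss_shifts summable_on_cmult_right summable_exp_neg_abs_int assms)+
  also have "\<dots> = exp (2 * a) * (\<Sum>\<^sub>\<infinity>k\<in>UNIV. exp (- a * \<bar>of_int k\<bar>))"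
    by (intro infsum_cmult_right summable_exp_neg_abs_int assms)
  finally show ?thesis .
qed

lemma holomorphic_on_infsum:
  fixes f :: "'i \<Rightarrow> complex \<Rightarrow> complex"
  assumes hol: "\<And>k. k \<in> I \<Longrightarrow> f k holomorphic_on UNIV"
    and majorant: "\<And>z0. \<exists>M. M summable_on I \<and> (\<forall>k\<in>I. \<forall>z\<in>cball z0 1. norm (f k z) \<le> M k)"
  shows "(\<lambda>z. \<Sum>\<^sub>\<infinity>k\<in>I. f k z) holomorphic_on UNIV"
proof -
  have "(\<lambda>z. \<Sum>\<^sub>\<infinity>k\<in>I. f k z) holomorphic_on ball z0 1" for z0
  proof -
    obtain M where "M summable_on I" and "\<forall>k\<in>I. \<forall>z\<in>cball z0 1. norm (f k z) \<le> M k"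
      using majorant by blast
    then have "uniform_limit (cball z0 1) (\<lambda>X z. \<Sum>k\<in>X. f k z) (\<lambda>z. \<Sum>\<^sub>\<infinity>k\<in>I. f k z)
                 (finite_subsets_at_top I)"
      by (intro Weierstrass_m_test_general) auto
    moreover have "\<forall>\<^sub>F X in finite_subsets_at_top I.
        continuous_on (cball z0 1) (\<lambda>z. \<Sum>k\<in>X. f k z) \<and> (\<lambda>z. \<Sum>k\<in>X. f k z) holomorphic_on ball z0 1"
      using hol by (intro eventually_finite_subsets_at_top_weakI conjI holomorphic_on_imp_continuous_on
          holomorphic_on_sum) (auto intro: holomorphic_on_subset)
    ultimately show ?thesis
      by (elim holomorphic_uniform_limit) simp_all
  qed
  then show ?thesis
    by (meson centre_in_ball holomorphic_on_open open_ball open_UNIV zero_less_one)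
qed

lemma norm_gauss_shift_le:
  assumes "a \<ge> 0" and "dist z z0 \<le> 1"
  shows "norm (gauss_shift a k z)
           \<le> exp (a * (\<bar>Im z0\<bar> + 1)\<^sup>2) * exp (a + a * (\<bar>Re z0\<bar> + 1)) * exp (- a * \<bar>of_int k\<bar>)"
proof -
  have "\<bar>Im z\<bar> \<le> \<bar>Im z0\<bar> + 1" and re: "\<bar>Re z\<bar> \<le> \<bar>Re z0\<bar> + 1"
    using abs_Im_le_cmod[of "z - z0"] abs_Re_le_cmod[of "z - z0"] assms(2)
    by (auto simp: dist_norm)
  then have "(Im z)\<^sup>2 \<le> (\<bar>Im z0\<bar> + 1)\<^sup>2"
    by (metis abs_ge_zero power2_abs power_mono)
  then have im_le: "exp (a * (Im z)\<^sup>2) \<le> exp (a * (\<bar>Im z0\<bar> + 1)\<^sup>2)"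
    using assms(1) by (simp add: mult_left_mono)
  have re_le: "exp (a + a * \<bar>Re z\<bar>) \<le> exp (a + a * (\<bar>Re z0\<bar> + 1))"
    using re assms(1) by (simp add: mult_left_mono)
  have "norm (gauss_shift a k z) \<le> exp (a * (Im z)\<^sup>2) * (exp (a + a * \<bar>Re z\<bar>) * exp (- a * \<bar>of_int k\<bar>))"
    unfolding norm_gauss_shift by (intro mult_left_mono gauss_le_exp_neg_abs assms(1)) simp
  also have "\<dots> \<le> exp (a * (\<bar>Im z0\<bar> + 1)\<^sup>2) * (exp (a + a * (\<bar>Re z0\<bar> + 1)) * exp (- a * \<bar>of_int k\<bar>))"
    by (intro mult_mono im_le re_le order_refl) simp_all
  finally show ?thesis by (simp only: mult.assoc)
qed

lemma holomorphic_gauss_expansion: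
  assumes "a > 0" and c: "\<And>k. norm (c k) \<le> B"
  shows "gauss_expansion a c holomorphic_on UNIV"
proof -
  have B: "0 \<le> B" using c[of 0] by (rule order_trans[OF norm_ge_zero])
  have "\<exists>M. M summable_on UNIV \<and> (\<forall>k. \<forall>z\<in>cball z0 1. norm (c k * gauss_shift a k z) \<le> M k)" for z0
  proof (intro exI conjI ballI allI)
    let ?M = "\<lambda>k. B * (exp (a * (\<bar>Im z0\<bar> + 1)\<^sup>2) * exp (a + a * (\<bar>Re z0\<bar> + 1)) * exp (- a * \<bar>of_int k\<bar>))"
    show "?M summable_on UNIV"
      using assms(1) by (intro summable_on_cmult_right summable_exp_neg_abs_int)
    show "norm (c k * gauss_shift a k z) \<le> ?M k" if "z \<in> cball z0 1" for k z
    proof -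
      have "norm (gauss_shift a k z)
              \<le> exp (a * (\<bar>Im z0\<bar> + 1)\<^sup>2) * exp (a + a * (\<bar>Re z0\<bar> + 1)) * exp (- a * \<bar>of_int k\<bar>)"
        using that assms(1) by (intro norm_gauss_shift_le) (auto simp: dist_commute)
      then show ?thesis
        unfolding norm_mult using B by (intro mult_mono c) simp_all
    qed
  qed
  then show ?thesis
    unfolding gauss_expansion_def[abs_def]
    by (intro holomorphic_on_infsum) (auto simp: gauss_shift_def intro!: holomorphic_intros)
qed

lemma norm_gauss_expansion_le:
  assumes "a > 0" and c: "\<And>k. norm (c k) \<le> B"
  shows "norm (gauss_expansion a c z)
           \<le> B * exp (a * (Im z)\<^sup>2) * (\<Sum>\<^sub>\<infinity>k\<in>UNIV. gauss a (Re z - of_int k))"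
proof -
  let ?h = "\<lambda>k. B * exp (a * (Im z)\<^sup>2) * gauss a (Re z - of_int k)"
  have h: "?h summable_on UNIV"
    by (intro summable_on_cmult_right summable_gauss_shifts assms(1))
  have le: "norm (c k * gauss_shift a k z) \<le> ?h k" for k
    unfolding norm_mult norm_gauss_shift mult.assoc[symmetric]
    by (intro mult_right_mono c) (auto simp: gauss_def)
  have abs: "(\<lambda>k. norm (c k * gauss_shift a k z)) summable_on UNIV"
    by (rule summable_on_comparison_test[OF h]) (use le in auto)
  have "norm (gauss_expansion a c z) \<le> (\<Sum>\<^sub>\<infinity>k\<in>UNIV. norm (c k * gauss_shift a k z))"
    unfolding gauss_expansion_def by (rule norm_infsum_bound[OF abs])
  also have "\<dots> \<le> (\<Sum>\<^sub>\<infinity>k\<in>UNIV. ?h k)"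
    by (rule infsum_mono[OF abs h le])
  also have "\<dots> = B * exp (a * (Im z)\<^sup>2) * (\<Sum>\<^sub>\<infinity>k\<in>UNIV. gauss a (Re z - of_int k))"
    by (intro infsum_cmult_right summable_gauss_shifts assms(1))
  finally show ?thesis .
qed

lemma gauss_expansion_of_real: "gauss_expansion a c (complex_of_real x) = gauss_series a c x"
  by (simp add: gauss_expansion_def gauss_series_def gauss_shift_of_real)

lemma norm_le_linf_norm:
  assumes "bounded (range c)"
  shows "norm (c k) \<le> linf_norm c"
proof -
  have "bdd_above (range (\<lambda>k. norm (c k)))"
    using assms by (auto simp: bounded_iff bdd_above_def)
  then show ?thesis
    unfolding linf_norm_def by (rule cSUP_upper[rotated]) simp
qed

theorem lemma4p1:
  fixes a :: real
  assumes "a > 0"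
  shows "\<exists>C>0. \<forall>c :: int \<Rightarrow> complex. bounded (range c) \<longrightarrow>
           (\<exists>F. F holomorphic_on UNIV
              \<and> (\<forall>x::real. F (complex_of_real x) = gauss_series a c x)
              \<and> (\<forall>x y::real. norm (F (Complex x y)) \<le> C * linf_norm c * exp (a * y\<^sup>2)))"
proof (intro exI[of _ "exp (2 * a) * (\<Sum>\<^sub>\<infinity>k\<in>UNIV. exp (- a * \<bar>of_int k\<bar>)) + 1"] conjI allI impI)
  let ?K = "exp (2 * a) * (\<Sum>\<^sub>\<infinity>k\<in>UNIV. exp (- a * \<bar>of_int k\<bar>))"
  have K: "0 \<le> ?K" by (intro mult_nonneg_nonneg infsum_nonneg) auto
  then show "?K + 1 > 0" by simp
  fix c :: "int \<Rightarrow> complex"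
  assume "bounded (range c)"
  then have c: "norm (c k) \<le> linf_norm c" for k by (rule norm_le_linf_norm)
  then have L: "0 \<le> linf_norm c" using norm_ge_zero order_trans by blast
  have "norm (gauss_expansion a c (Complex x y)) \<le> (?K + 1) * linf_norm c * exp (a * y\<^sup>2)" for x y
  proof -
    have "norm (gauss_expansion a c (Complex x y))
            \<le> linf_norm c * exp (a * y\<^sup>2) * (\<Sum>\<^sub>\<infinity>k\<in>UNIV. gauss a (x - of_int k))"
      using norm_gauss_expansion_le[OF assms c, where z = "Complex x y"] by simp
    also have "\<dots> \<le> linf_norm c * exp (a * y\<^sup>2) * ?K"
      using L by (intro mult_left_mono infsum_gauss_shifts_le assms) simp_all
    also have "\<dots> \<le> linf_norm c * exp (a * y\<^sup>2) * (?K + 1)"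
      using L by (intro mult_left_mono) auto
    finally show ?thesis by (simp add: algebra_simps)
  qed
  moreover have "gauss_expansion a c holomorphic_on UNIV"
    using assms c by (rule holomorphic_gauss_expansion)
  ultimately show "\<exists>F. F holomorphic_on UNIV \<and> (\<forall>x. F (complex_of_real x) = gauss_series a c x)
               \<and> (\<forall>x y. norm (F (Complex x y)) \<le> (?K + 1) * linf_norm c * exp (a * y\<^sup>2))"
    using gauss_expansion_of_real by blast
qed

end
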